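(* Let $\Omega\subset\mathbb{R}^{n+1}$ be a compact convex body with $C^1$ boundary containing $0$ in its interior, and let $(\Omega_k)_{k\ge1}$ be a sequence of smooth uniformly convex bodies converging to $\Omega$ in Hausdorff distance. Then there exists a constant $C_\Omega>0$ depending only on $\Omega$ such that $d_{\partial\Omega_k}(X,Y)\le C_\Omega|X-Y|$ for all $X,Y\in\partial\Omega_k$ and all $k$ sufficiently large.
   Context: For a body $D$, $d_{\partial D}(X_1,X_2):=\inf\int_0^1|\dot\sigma(t)|dt$ over $C^1$ curves $\sigma$ in $\partial D$ from $X_1$ to $X_2$. A convex set $D$ is uniformly convex if there is $R>0$ with $D\subset B^{n+1}_R(X-R\nu)$ for every $X\in\partial D$ and every outward unit normal $\nu$ at $X$. Hausdorff distance: $d_H(A,B)=\max(\sup_{a\in A}\mathrm{dist}(a,B),\sup_{b\in B}\mathrm{dist}(b,A))$. *)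

theory Defs
  imports "HOL-Analysis.Analysis"
begin

definition hausdorff_dist :: "'a::metric_space set \<Rightarrow> 'a set \<Rightarrow> real" where
  "hausdorff_dist A B =
     max (SUP a\<in>A. infdist a B) (SUP b\<in>B. infdist b A)"

definition convex_body :: "'a::euclidean_space set \<Rightarrow> bool" where
  "convex_body D \<longleftrightarrow> compact D \<and> convex D \<and> interior D \<noteq> {}"

fun Ck_on :: "nat \<Rightarrow> 'a::euclidean_space set \<Rightarrow> ('a \<Rightarrow> real) \<Rightarrow> bool" where
  "Ck_on 0 U f = continuous_on U f"
| "Ck_on (Suc k) U f =
     (\<exists>g. (\<forall>y\<in>U. (f has_derivative (\<lambda>h. g y \<bullet> h)) (at y))
          \<and> (\<forall>b\<in>Basis. Ck_on k U (\<lambda>y. g y \<bullet> b)))"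

definition smooth_fun_on :: "'a::euclidean_space set \<Rightarrow> ('a \<Rightarrow> real) \<Rightarrow> bool" where
  "smooth_fun_on U f \<longleftrightarrow> (\<forall>k. Ck_on k U f)"

definition C1_boundary :: "'a::euclidean_space set \<Rightarrow> bool" where
  "C1_boundary D \<longleftrightarrow>
     (\<forall>X\<in>frontier D. \<exists>U \<rho> g. open U \<and> X \<in> U
        \<and> (\<forall>y\<in>U. (\<rho> has_derivative (\<lambda>h. g y \<bullet> h)) (at y) \<and> g y \<noteq> 0)
        \<and> continuous_on U g
        \<and> D \<inter> U = {y\<in>U. \<rho> y \<le> 0})"

definition smooth_boundary :: "'a::euclidean_space set \<Rightarrow> bool" where
  "smooth_boundary D \<longleftrightarrow>
     (\<forall>X\<in>frontier D. \<exists>U \<rho> g. open U \<and> X \<in> U \<and> smooth_fun_on U \<rho>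
        \<and> (\<forall>y\<in>U. (\<rho> has_derivative (\<lambda>h. g y \<bullet> h)) (at y) \<and> g y \<noteq> 0)
        \<and> D \<inter> U = {y\<in>U. \<rho> y \<le> 0})"

definition outward_unit_normal :: "'a::euclidean_space set \<Rightarrow> 'a \<Rightarrow> 'a \<Rightarrow> bool" where
  "outward_unit_normal D X \<nu> \<longleftrightarrow> norm \<nu> = 1 \<and> (\<forall>Y\<in>D. \<nu> \<bullet> (Y - X) \<le> 0)"

definition uniformly_convex :: "'a::euclidean_space set \<Rightarrow> bool" where
  "uniformly_convex D \<longleftrightarrow> convex D \<and>
     (\<exists>R>0. \<forall>X\<in>frontier D. \<forall>\<nu>. outward_unit_normal D X \<nu> \<longrightarrow> D \<subseteq> cball (X - R *\<^sub>R \<nu>) R)"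

text \<open>Intrinsic distance on the boundary of D: infimum of the lengths of
  C^1 curves in the boundary joining X1 to X2 (value \<infinity> if there is none).\<close>
definition boundary_dist :: "'a::euclidean_space set \<Rightarrow> 'a \<Rightarrow> 'a \<Rightarrow> ereal" where
  "boundary_dist D X1 X2 =
     Inf (ereal ` {integral {0..1} (\<lambda>t. norm (\<sigma>' t)) | \<sigma> \<sigma>'.
        (\<forall>t\<in>{0..1}. (\<sigma> has_vector_derivative \<sigma>' t) (at t within {0..1::real}))
        \<and> continuous_on {0..1} \<sigma>'
        \<and> \<sigma> ` {0..1} \<subseteq> frontier D \<and> \<sigma> 0 = X1 \<and> \<sigma> 1 = X2})"

end

theory Submission
  imports Defs
begin

text \<open>Choose \<open>r\<^sub>0, R\<^sub>0\<close> with \<open>cball 0 r\<^sub>0 \<subseteq> \<Omega> \<subseteq> cball 0 R\<^sub>0\<close>. Once the Hausdorff distance is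
  below \<open>r\<^sub>0/2\<close>, every \<open>\<Omega>\<^sub>k\<close> lies between the balls of radii \<open>r = r\<^sub>0/2\<close> and \<open>R = R\<^sub>0 + r\<^sub>0/2\<close>.
  For a convex body \<open>K\<close> with \<open>C\<^sup>1\<close> boundary between these balls, the Minkowski gauge \<open>\<gamma>\<close> of \<open>K\<close>
  is \<open>C\<^sup>1\<close> away from \<open>0\<close> with \<open>|\<nabla>\<gamma>| \<le> 1/r\<close>, so the radial projection \<open>x \<mapsto> x / \<gamma> x\<close> turns a
  \<open>C\<^sup>1\<close> path that avoids a ball around \<open>0\<close> into a \<open>C\<^sup>1\<close> path in \<open>\<partial>K\<close> whose speed is controlled
  by \<open>r\<close> and \<open>R\<close>. Projecting the segment from \<open>X\<close> to \<open>Y\<close>, bent sideways so that it stays at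
  distance \<open>r/5\<close> from \<open>0\<close> and has speed at most \<open>5 |X - Y|\<close>, gives
  \<open>boundary_dist K X Y \<le> C(r, R) |X - Y|\<close>.\<close>

section \<open>Defining functions of the boundary\<close>

lemma has_derivative_inner_unique:
  fixes f :: "'a::euclidean_space \<Rightarrow> real"
  assumes "(f has_derivative (\<lambda>h. u \<bullet> h)) (at x)" "(f has_derivative (\<lambda>h. v \<bullet> h)) (at x)"
  shows "u = v"
proof -
  have "(\<lambda>h. u \<bullet> h) = (\<lambda>h. v \<bullet> h)" using has_derivative_unique[OF assms] .
  then have "u \<bullet> (u - v) = v \<bullet> (u - v)" by metis
  then have "(u - v) \<bullet> (u - v) = 0" by (simp add: inner_diff_left)
  then show ?thesis by simp
qed

lemma continuous_on_gradient_if_smooth: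
  assumes "smooth_fun_on U \<rho>" and der: "\<forall>y\<in>U. (\<rho> has_derivative (\<lambda>h. g y \<bullet> h)) (at y)"
  shows "continuous_on U g"
proof -
  have "Ck_on (Suc (Suc 0)) U \<rho>" using assms(1) unfolding smooth_fun_on_def by blast
  then obtain g2 where g2: "\<forall>y\<in>U. (\<rho> has_derivative (\<lambda>h. g2 y \<bullet> h)) (at y)"
    and g2_C1: "\<forall>b\<in>Basis. Ck_on (Suc 0) U (\<lambda>y. g2 y \<bullet> b)"
    by auto
  have "continuous_on U (\<lambda>y. g2 y \<bullet> b)" if b: "b \<in> Basis" for b
  proof -
    obtain g3 where g3: "\<forall>y\<in>U. ((\<lambda>y. g2 y \<bullet> b) has_derivative (\<lambda>h. g3 y \<bullet> h)) (at y)"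
      using g2_C1 b by auto
    show ?thesis
      by (rule continuous_at_imp_continuous_on) (use g3 has_derivative_continuous in blast)
  qed
  then have "continuous_on U g2" by (subst continuous_on_componentwise) blast
  moreover have "\<forall>y\<in>U. g y = g2 y"
  proof
    fix y assume "y \<in> U"
    then show "g y = g2 y" using has_derivative_inner_unique[of \<rho> "g y" y "g2 y"] der g2 by blast
  qed
  ultimately show ?thesis by (metis continuous_on_cong)
qed

lemma smooth_boundary_imp_C1_boundary:
  assumes "smooth_boundary D"
  shows "C1_boundary D"
  unfolding C1_boundary_def
proof
  fix X assume "X \<in> frontier D"
  then obtain U \<rho> g where chart: "open U" "X \<in> U" "smooth_fun_on U \<rho>"
    "\<forall>y\<in>U. (\<rho> has_derivative (\<lambda>h. g y \<bullet> h)) (at y) \<and> g y \<noteq> 0"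
    "D \<inter> U = {y\<in>U. \<rho> y \<le> 0}"
    using assms unfolding smooth_boundary_def by meson
  have "continuous_on U g"
    using continuous_on_gradient_if_smooth[OF chart(3)] chart(4) by blast
  with chart show "\<exists>U \<rho> g. open U \<and> X \<in> U
        \<and> (\<forall>y\<in>U. (\<rho> has_derivative (\<lambda>h. g y \<bullet> h)) (at y) \<and> g y \<noteq> 0)
        \<and> continuous_on U g \<and> D \<inter> U = {y\<in>U. \<rho> y \<le> 0}"
    by (intro exI[of _ U] exI[of _ \<rho>] exI[of _ g]) simp
qed

lemma mem_iff_chart_nonpos:
  assumes "K \<inter> U = {w\<in>U. \<rho> w \<le> 0}" "w \<in> U"
  shows "w \<in> K \<longleftrightarrow> \<rho> w \<le> 0"
  using assms by (metis (mono_tags, lifting) Int_iff mem_Collect_eq)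

lemma chart_vanishes_at_frontier:
  fixes \<rho> :: "'a::real_normed_vector \<Rightarrow> real"
  assumes Z: "Z \<in> frontier K" "Z \<in> U" and "closed K" "open U" "isCont \<rho> Z"
    and KU: "K \<inter> U = {w\<in>U. \<rho> w \<le> 0}"
  shows "\<rho> Z = 0"
proof (rule ccontr)
  assume "\<rho> Z \<noteq> 0"
  moreover have "\<rho> Z \<le> 0"
    using Z frontier_subset_closed[OF \<open>closed K\<close>] mem_iff_chart_nonpos[OF KU] by blast
  ultimately have "\<rho> Z < 0" by simp
  moreover have "(\<rho> \<longlongrightarrow> \<rho> Z) (nhds Z)"
    using \<open>isCont \<rho> Z\<close> by (simp add: isCont_def tendsto_at_iff_tendsto_nhds)
  ultimately have "eventually (\<lambda>w. \<rho> w < 0) (nhds Z)" using order_tendstoD(2) by blast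
  moreover have "eventually (\<lambda>w. w \<in> U) (nhds Z)"
    using \<open>open U\<close> Z(2) by (rule eventually_nhds_in_open)
  ultimately have "eventually (\<lambda>w. w \<in> K) (nhds Z)"
    by eventually_elim (simp add: mem_iff_chart_nonpos[OF KU])
  then obtain S where "open S" "Z \<in> S" "S \<subseteq> K"
    unfolding eventually_nhds by auto
  then have "Z \<in> interior K" by (rule interiorI)
  then show False using Z(1) by (simp add: frontier_def)
qed

text \<open>If the gradient pointed into \<open>K\<close> along the segment towards some \<open>w \<in> K\<close>, the
  defining function would become positive on that segment, which stays in \<open>K\<close>.\<close>
lemma chart_gradient_supports:
  fixes \<rho> :: "'a::real_inner \<Rightarrow> real"
  assumes "convex K" "Z \<in> K" "w \<in> K" "open U" "Z \<in> U" "\<rho> Z = 0"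
    and der: "(\<rho> has_derivative (\<lambda>h. n \<bullet> h)) (at Z)" and KU: "K \<inter> U = {w\<in>U. \<rho> w \<le> 0}"
  shows "n \<bullet> (w - Z) \<le> 0"
proof (rule ccontr)
  assume "\<not> n \<bullet> (w - Z) \<le> 0"
  define \<phi> where "\<phi> s = \<rho> (Z + s *\<^sub>R (w - Z))" for s
  have "((\<lambda>s. Z + s *\<^sub>R (w - Z)) has_derivative (\<lambda>s. s *\<^sub>R (w - Z))) (at 0)"
    by (auto intro!: derivative_eq_intros)
  moreover have "(\<rho> has_derivative (\<lambda>h. n \<bullet> h)) (at (Z + 0 *\<^sub>R (w - Z)))"
    using der by simp
  ultimately have "(\<phi> has_derivative (\<lambda>s. n \<bullet> (s *\<^sub>R (w - Z)))) (at 0)"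
    unfolding \<phi>_def by (rule has_derivative_compose)
  then have "(\<phi> has_real_derivative n \<bullet> (w - Z)) (at 0)"
    by (simp add: has_field_derivative_def mult.commute[of _ "n \<bullet> (w - Z)"])
  from DERIV_pos_inc_right[OF this] \<open>\<not> n \<bullet> (w - Z) \<le> 0\<close>
  obtain d where "0 < d" and increase: "\<forall>s>0. s < d \<longrightarrow> \<phi> 0 < \<phi> (0 + s)"
    by auto
  have "((\<lambda>s. Z + s *\<^sub>R (w - Z)) \<longlongrightarrow> Z) (at_right 0)"
    by (auto intro!: tendsto_eq_intros)
  then have "eventually (\<lambda>s. Z + s *\<^sub>R (w - Z) \<in> U) (at_right 0)"
    using \<open>open U\<close> \<open>Z \<in> U\<close> by (rule topological_tendstoD)
  moreover have "eventually (\<lambda>s. 0 < s \<and> s < min d 1) (at_right (0::real))"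
    using \<open>0 < d\<close> by (auto simp: eventually_at_right_field intro: exI[of _ "min d 1"])
  ultimately have "eventually (\<lambda>s. 0 < s \<and> s < min d 1 \<and> Z + s *\<^sub>R (w - Z) \<in> U) (at_right 0)"
    by eventually_elim auto
  then obtain s where s: "0 < s" "s < d" "s < 1" "Z + s *\<^sub>R (w - Z) \<in> U"
    using eventually_happens'[of "at_right (0::real)"] by auto
  have "Z + s *\<^sub>R (w - Z) = (1 - s) *\<^sub>R Z + s *\<^sub>R w" by (simp add: algebra_simps)
  then have "Z + s *\<^sub>R (w - Z) \<in> K" using convexD[OF \<open>convex K\<close> \<open>Z \<in> K\<close> \<open>w \<in> K\<close>, of "1 - s" s] s by simp
  then have "\<phi> s \<le> 0" using mem_iff_chart_nonpos[OF KU s(4)] by (simp add: \<phi>_def)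
  moreover have "\<phi> 0 = 0" using \<open>\<rho> Z = 0\<close> by (simp add: \<phi>_def)
  ultimately show False using increase s(1,2) by force
qed

lemma chart_inward_cone_subset:
  fixes \<rho> :: "'a::real_inner \<Rightarrow> real"
  assumes "open U" "Z \<in> U" "\<rho> Z = 0" and der: "(\<rho> has_derivative (\<lambda>h. n \<bullet> h)) (at Z)"
    and KU: "K \<inter> U = {w\<in>U. \<rho> w \<le> 0}" and "0 < e"
  shows "\<exists>d>0. \<forall>w. norm (w - Z) < d \<and> n \<bullet> (w - Z) \<le> - e * norm (w - Z) \<longrightarrow> w \<in> K"
proof -
  obtain d1 where "0 < d1"
    and d1: "\<And>w. norm (w - Z) < d1 \<Longrightarrow> \<bar>\<rho> w - \<rho> Z - n \<bullet> (w - Z)\<bar> \<le> e * norm (w - Z)"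
    using der \<open>0 < e\<close> unfolding has_derivative_at_alt by (auto simp: real_norm_def)
  obtain d2 where "0 < d2" "ball Z d2 \<subseteq> U" using \<open>open U\<close> \<open>Z \<in> U\<close> open_contains_ball by blast
  show ?thesis
  proof (intro exI[of _ "min d1 d2"] conjI allI impI)
    fix w assume w: "norm (w - Z) < min d1 d2 \<and> n \<bullet> (w - Z) \<le> - e * norm (w - Z)"
    then have "w \<in> U" using \<open>ball Z d2 \<subseteq> U\<close> by (auto simp: dist_norm norm_minus_commute)
    moreover have "\<rho> w \<le> 0" using d1[of w] w \<open>\<rho> Z = 0\<close> by auto
    ultimately show "w \<in> K" using mem_iff_chart_nonpos[OF KU] by blast
  qed (use \<open>0 < d1\<close> \<open>0 < d2\<close> in auto)
qed

section \<open>Hausdorff distance\<close>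

lemma hausdorff_dist_commute: "hausdorff_dist A B = hausdorff_dist B A"
  unfolding hausdorff_dist_def by (rule max.commute)

lemma infdist_le_hausdorff_dist:
  fixes A B :: "'a::euclidean_space set"
  assumes "compact A" "a \<in> A"
  shows "infdist a B \<le> hausdorff_dist A B"
proof -
  have "bdd_above ((\<lambda>a. infdist a B) ` A)"
    by (intro bounded_imp_bdd_above compact_imp_bounded compact_continuous_image assms(1)
        continuous_on_infdist continuous_on_id)
  then have "infdist a B \<le> (SUP a\<in>A. infdist a B)" by (rule cSUP_upper[OF assms(2)])
  then show ?thesis unfolding hausdorff_dist_def by simp
qed

lemma subset_cball_if_hausdorff_dist_less:
  fixes A B :: "'a::euclidean_space set"
  assumes "compact A" "closed B" "B \<noteq> {}" "B \<subseteq> cball x R" "hausdorff_dist A B < e"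
  shows "A \<subseteq> cball x (R + e)"
proof
  fix a assume a: "a \<in> A"
  obtain b where b: "b \<in> B" "infdist a B = dist a b"
    using infdist_attains_inf[OF assms(2,3)] by blast
  have "dist a b < e" using infdist_le_hausdorff_dist[OF assms(1) a, of B] assms(5) b by simp
  moreover have "dist x b \<le> R" using b assms(4) by auto
  ultimately show "a \<in> cball x (R + e)" using dist_triangle[of x a b] by (simp add: dist_commute)
qed

text \<open>A point of the small ball missing from the convex set \<open>A\<close> is separated from \<open>A\<close> by a
  hyperplane; moving from it by \<open>e\<close> away from \<open>A\<close> gives a point of \<open>B\<close> at distance more than \<open>e\<close>
  from \<open>A\<close>.\<close>
lemma cball_subset_if_hausdorff_dist_less:
  fixes A B :: "'a::euclidean_space set"
  assumes A: "convex A" "closed A" "A \<noteq> {}" and B: "compact B" "cball x (\<rho> + e) \<subseteq> B"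
    and h: "hausdorff_dist A B < e" and e: "0 < e"
  shows "cball x \<rho> \<subseteq> A"
proof
  fix z assume z: "z \<in> cball x \<rho>"
  show "z \<in> A"
  proof (rule ccontr)
    assume "z \<notin> A"
    then obtain a \<beta> where sep: "a \<bullet> z < \<beta>" "\<forall>w\<in>A. \<beta> < a \<bullet> w"
      using separating_hyperplane_closed_point[OF A(1,2)] by blast
    have "a \<noteq> 0" using sep A(3) by auto
    define \<nu> where "\<nu> = a /\<^sub>R norm a"
    have \<nu>: "norm \<nu> = 1" using \<open>a \<noteq> 0\<close> by (simp add: \<nu>_def)
    define q where "q = z - e *\<^sub>R \<nu>"
    have "dist x q \<le> dist x z + dist z q" by (rule dist_triangle)
    also have "\<dots> \<le> \<rho> + e" using z \<nu> e by (simp add: q_def dist_norm)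
    finally have "q \<in> B" using B(2) by auto
    obtain w where w: "w \<in> A" "infdist q A = dist q w"
      using infdist_attains_inf[OF A(2,3)] by blast
    have "infdist q A < e"
      using infdist_le_hausdorff_dist[OF B(1) \<open>q \<in> B\<close>, of A] h
      by (simp add: hausdorff_dist_commute)
    have "0 < \<nu> \<bullet> (w - z)"
      using sep w(1) \<open>a \<noteq> 0\<close> by (auto simp: \<nu>_def inner_diff_right)
    then have "e < \<nu> \<bullet> (w - q)" using \<nu> by (simp add: q_def inner_diff_right dot_square_norm)
    also have "\<dots> \<le> dist q w"
      using norm_cauchy_schwarz[of \<nu> "w - q"] \<nu> by (simp add: dist_norm norm_minus_commute)
    finally show False using \<open>infdist q A < e\<close> w(2) by simp
  qed
qed

section \<open>Paths on the boundary\<close>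

lemma boundary_dist_le_if_path:
  fixes \<sigma> \<sigma>' :: "real \<Rightarrow> 'a::euclidean_space"
  assumes "\<And>t. t \<in> {0..1} \<Longrightarrow> (\<sigma> has_vector_derivative \<sigma>' t) (at t within {0..1})"
    and "continuous_on {0..1} \<sigma>'" and "\<sigma> ` {0..1} \<subseteq> frontier D"
    and bound: "\<And>t. t \<in> {0..1} \<Longrightarrow> norm (\<sigma>' t) \<le> B"
  shows "boundary_dist D (\<sigma> 0) (\<sigma> 1) \<le> ereal B"
proof -
  have "boundary_dist D (\<sigma> 0) (\<sigma> 1) \<le> ereal (integral {0..1} (\<lambda>t. norm (\<sigma>' t)))"
    unfolding boundary_dist_def using assms(1-3) by (intro Inf_lower) blast
  also have "integral {0..1} (\<lambda>t. norm (\<sigma>' t)) \<le> integral {0..1::real} (\<lambda>t. B)"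
  proof (rule integral_le)
    show "(\<lambda>t. norm (\<sigma>' t)) integrable_on {0..1}"
      using \<open>continuous_on {0..1} \<sigma>'\<close> by (intro integrable_continuous_interval continuous_intros)
  qed (use bound in auto)
  finally show ?thesis by simp
qed

lemma unit_orthogonal_vector_exists:
  fixes X Y :: "'a::euclidean_space"
  assumes "DIM('a) \<ge> 2"
  obtains W where "norm W = 1" "W \<bullet> (X - Y) = 0" "0 \<le> W \<bullet> X"
proof -
  obtain v where "v \<noteq> 0" "orthogonal (X - Y) v"
    using orthogonal_to_vector_exists[OF assms] by blast
  then have W: "norm (v /\<^sub>R norm v) = 1" "(v /\<^sub>R norm v) \<bullet> (X - Y) = 0"
    by (auto simp: orthogonal_def inner_commute)
  show ?thesis
  proof (cases "0 \<le> (v /\<^sub>R norm v) \<bullet> X")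
    case True
    then show ?thesis using that W by blast
  next
    case False
    then show ?thesis using that[of "- (v /\<^sub>R norm v)"] W by simp
  qed
qed

text \<open>The segment from \<open>X\<close> to \<open>Y\<close> pushed sideways in the direction \<open>W\<close> by a parabolic bump
  whose height is proportional to \<open>dist X Y\<close>; for \<open>W \<bottom> X - Y\<close> with \<open>W \<bullet> X \<ge> 0\<close> this keeps the
  path away from the origin even when the segment passes through it.\<close>
definition detour :: "'a::real_normed_vector \<Rightarrow> 'a \<Rightarrow> 'a \<Rightarrow> real \<Rightarrow> 'a" where
  "detour X Y W t = (1 - t) *\<^sub>R X + t *\<^sub>R Y + (4 * dist X Y * t * (1 - t)) *\<^sub>R W"

lemma detour_endpoints: "detour X Y W 0 = X" "detour X Y W 1 = Y"
  by (simp_all add: detour_def)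

lemma detour_has_vector_derivative:
  "(detour X Y W has_vector_derivative (Y - X) + (4 * dist X Y * (1 - 2 * t)) *\<^sub>R W) (at t)"
  unfolding detour_def[abs_def] by (auto intro!: derivative_eq_intros simp: algebra_simps)

lemma norm_detour_derivative_le:
  assumes "norm W = 1" "t \<in> {0..1}"
  shows "norm ((Y - X) + (4 * dist X Y * (1 - 2 * t)) *\<^sub>R W) \<le> 5 * dist X Y"
proof -
  have "norm ((Y - X) + (4 * dist X Y * (1 - 2 * t)) *\<^sub>R W) \<le> dist X Y + 4 * dist X Y * \<bar>1 - 2 * t\<bar>"
    using norm_triangle_ineq[of "Y - X" "(4 * dist X Y * (1 - 2 * t)) *\<^sub>R W"] assms(1)
    by (simp add: abs_mult dist_norm norm_minus_commute)
  also have "\<dots> \<le> dist X Y + 4 * dist X Y * 1"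
    using assms(2) by (intro add_left_mono mult_left_mono) auto
  finally show ?thesis by simp
qed

lemma norm_detour_diff_le:
  assumes "norm W = 1" "t \<in> {0..1}"
  shows "norm (detour X Y W t - X) \<le> 5 * t * dist X Y"
    and "norm (detour X Y W t - Y) \<le> 5 * (1 - t) * dist X Y"
proof -
  have "t * (1 - t) \<le> t" "t * (1 - t) \<le> 1 - t"
    using assms(2) mult_left_mono[of "1 - t" 1 t] mult_right_mono[of t 1 "1 - t"] by auto
  then have bump: "4 * dist X Y * t * (1 - t) \<le> 4 * dist X Y * t"
    "4 * dist X Y * t * (1 - t) \<le> 4 * dist X Y * (1 - t)"
    using mult_left_mono[of _ _ "4 * dist X Y"] by (simp_all add: mult.assoc)
  have "detour X Y W t - X = t *\<^sub>R (Y - X) + (4 * dist X Y * t * (1 - t)) *\<^sub>R W"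
    by (simp add: detour_def algebra_simps)
  then have "norm (detour X Y W t - X) \<le> t * dist X Y + 4 * dist X Y * t * (1 - t)"
    using norm_triangle_ineq[of "t *\<^sub>R (Y - X)" "(4 * dist X Y * t * (1 - t)) *\<^sub>R W"] assms
    by (simp add: dist_norm norm_minus_commute)
  then show "norm (detour X Y W t - X) \<le> 5 * t * dist X Y" using bump(1) by (simp add: algebra_simps)
  have "detour X Y W t - Y = (1 - t) *\<^sub>R (X - Y) + (4 * dist X Y * t * (1 - t)) *\<^sub>R W"
    by (simp add: detour_def algebra_simps)
  then have "norm (detour X Y W t - Y) \<le> (1 - t) * dist X Y + 4 * dist X Y * t * (1 - t)"
    using norm_triangle_ineq[of "(1 - t) *\<^sub>R (X - Y)" "(4 * dist X Y * t * (1 - t)) *\<^sub>R W"] assms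
    by (simp add: dist_norm)
  then show "norm (detour X Y W t - Y) \<le> 5 * (1 - t) * dist X Y" using bump(2) by (simp add: algebra_simps)
qed

lemma norm_detour_ge_bump:
  assumes "norm W = 1" "W \<bullet> (X - Y) = 0" "0 \<le> W \<bullet> X" "t \<in> {0..1}"
  shows "4 * dist X Y * t * (1 - t) \<le> norm (detour X Y W t)"
proof -
  have "W \<bullet> detour X Y W t = W \<bullet> X + 4 * dist X Y * t * (1 - t)"
    using assms(1,2) by (simp add: detour_def inner_add_right inner_diff_right algebra_simps dot_square_norm)
  moreover have "W \<bullet> detour X Y W t \<le> norm (detour X Y W t)"
    using norm_cauchy_schwarz[of W "detour X Y W t"] assms(1) by simp
  ultimately show ?thesis using assms(3) by linarith
qed

text \<open>Near either end the detour is close to \<open>X\<close> or \<open>Y\<close>, which have norm at least \<open>r\<close>; in the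
  middle the bump alone has height at least \<open>r/5\<close>.\<close>
lemma norm_detour_ge:
  assumes "norm W = 1" "W \<bullet> (X - Y) = 0" "0 \<le> W \<bullet> X" "t \<in> {0..1}"
    and "r \<le> norm X" "r \<le> norm Y" "0 < r"
  shows "r / 5 \<le> norm (detour X Y W t)"
proof -
  let ?c = "detour X Y W t" and ?D = "dist X Y"
  have near_X: "r - 5 * (t * ?D) \<le> norm ?c"
    using norm_detour_diff_le(1)[where X = X and Y = Y, OF assms(1,4)] norm_triangle_ineq2[of X ?c] assms(5)
    by (simp add: norm_minus_commute mult.assoc)
  have near_Y: "r - 5 * ((1 - t) * ?D) \<le> norm ?c"
    using norm_detour_diff_le(2)[where X = X and Y = Y, OF assms(1,4)] norm_triangle_ineq2[of Y ?c] assms(6)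
    by (simp add: norm_minus_commute algebra_simps)
  have bump: "4 * ?D * t * (1 - t) \<le> norm ?c" by (rule norm_detour_ge_bump[OF assms(1-4)])
  show ?thesis
  proof (cases "t \<le> 1 / 2")
    case True
    have "4 * ?D * t * (1 / 2) \<le> 4 * ?D * t * (1 - t)"
      using True assms(4) by (intro mult_left_mono) auto
    then have "2 * (t * ?D) \<le> 4 * ?D * t * (1 - t)" by simp
    then show ?thesis using near_X bump assms(7) by linarith
  next
    case False
    have "4 * ?D * (1 - t) * (1 / 2) \<le> 4 * ?D * (1 - t) * t"
      using False assms(4) by (intro mult_left_mono) auto
    then have "2 * ((1 - t) * ?D) \<le> 4 * ?D * t * (1 - t)" by (simp add: mult_ac)
    then show ?thesis using near_Y bump assms(7) by linarith
  qed
qed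

section \<open>The Minkowski gauge\<close>

lemma normal_correction_bounds:
  fixes n Z h :: "'a::real_inner"
  assumes "0 < n \<bullet> Z" "0 \<le> e"
  defines "q \<equiv> h - (n \<bullet> h / (n \<bullet> Z) + e * norm h) *\<^sub>R Z"
  shows "n \<bullet> q = - (e * norm h * (n \<bullet> Z))"
    and "norm q \<le> (1 + norm n * norm Z / (n \<bullet> Z) + e * norm Z) * norm h"
proof -
  let ?c = "n \<bullet> Z"
  show "n \<bullet> q = - (e * norm h * ?c)"
    using assms(1) by (simp add: q_def inner_diff_right field_simps)
  have nh: "\<bar>n \<bullet> h / ?c\<bar> \<le> norm n * norm h / ?c"
    using Cauchy_Schwarz_ineq2[of n h] assms(1) by (simp add: divide_right_mono)
  have "norm q \<le> norm h + \<bar>n \<bullet> h / ?c + e * norm h\<bar> * norm Z"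
    unfolding q_def using norm_triangle_ineq4[of h "(n \<bullet> h / ?c + e * norm h) *\<^sub>R Z"] by simp
  also have "\<dots> \<le> norm h + (norm n * norm h / ?c + e * norm h) * norm Z"
    using nh assms(2) abs_triangle_ineq[of "n \<bullet> h / ?c" "e * norm h"]
    by (intro add_left_mono mult_right_mono) auto
  finally show "norm q \<le> (1 + norm n * norm Z / ?c + e * norm Z) * norm h"
    by (simp add: algebra_simps)
qed

definition minkowski_gauge :: "'a::real_vector set \<Rightarrow> 'a \<Rightarrow> real" where
  "minkowski_gauge K y = Inf {t. 0 < t \<and> inverse t *\<^sub>R y \<in> K}"

definition minkowski_gauge_grad :: "'a::euclidean_space set \<Rightarrow> 'a \<Rightarrow> 'a" where
  "minkowski_gauge_grad K y = (SOME v. (minkowski_gauge K has_derivative (\<lambda>h. v \<bullet> h)) (at y))"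

locale convex_body_between_balls =
  fixes K :: "'a::euclidean_space set" and r R :: real
  assumes compact_K: "compact K" and convex_K: "convex K" and r_pos: "0 < r"
    and inner_ball: "cball 0 r \<subseteq> K" and outer_ball: "K \<subseteq> cball 0 R"
begin

lemma closed_K: "closed K"
  using compact_K compact_imp_closed by blast

lemma zero_in_K: "0 \<in> K"
  using inner_ball r_pos by auto

lemma ball_subset_interior: "ball 0 r \<subseteq> interior K"
  using inner_ball ball_subset_cball interior_maximal open_ball by (metis subset_trans)

lemma R_pos: "0 < R"
proof -
  obtain b :: 'a where b: "b \<in> Basis" using nonempty_Basis by blast
  then have "r *\<^sub>R b \<in> cball 0 r" using r_pos by simp
  then have "r *\<^sub>R b \<in> cball 0 R" using inner_ball outer_ball by blast
  then show ?thesis using b r_pos by simp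
qed

lemma frontier_subset_K: "frontier K \<subseteq> K"
  using closed_K frontier_subset_closed by blast

lemma norm_frontier_ge: "X \<in> frontier K \<Longrightarrow> r \<le> norm X"
  using ball_subset_interior unfolding frontier_def by (metis Diff_iff mem_ball_0 not_le subsetD)

lemma norm_frontier_le: "X \<in> frontier K \<Longrightarrow> norm X \<le> R"
  using outer_ball frontier_subset_K by fastforce

lemma scaled_mem_mono:
  assumes "0 < t" "inverse t *\<^sub>R y \<in> K" "t \<le> s"
  shows "inverse s *\<^sub>R y \<in> K"
proof -
  have "inverse s *\<^sub>R y = (t / s) *\<^sub>R (inverse t *\<^sub>R y) + (1 - t / s) *\<^sub>R 0"
    using assms by (simp add: field_simps)
  also have "\<dots> \<in> K"
    using assms by (intro convexD[OF convex_K]) (auto simp: zero_in_K divide_simps)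
  finally show ?thesis .
qed

lemma scaled_mem_exists: "\<exists>t. 0 < t \<and> inverse t *\<^sub>R y \<in> K"
proof (intro exI conjI)
  define t where "t = norm y / r + 1"
  show t: "0 < t" using r_pos by (simp add: t_def add_nonneg_pos)
  have "norm y \<le> r * t" using r_pos by (simp add: t_def field_simps)
  then have "inverse t *\<^sub>R y \<in> cball 0 r" using t by (simp add: field_simps)
  then show "inverse t *\<^sub>R y \<in> K" using inner_ball by blast
qed

lemma bdd_below_scalings: "bdd_below {t. 0 < t \<and> inverse t *\<^sub>R y \<in> K}"
  by (rule bdd_belowI[of _ 0]) auto

lemma minkowski_gauge_le: "0 < s \<Longrightarrow> inverse s *\<^sub>R y \<in> K \<Longrightarrow> minkowski_gauge K y \<le> s"
  unfolding minkowski_gauge_def by (rule cInf_lower) (auto simp: bdd_below_scalings)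

lemma minkowski_gauge_nonneg: "0 \<le> minkowski_gauge K y"
  unfolding minkowski_gauge_def using scaled_mem_exists by (intro cInf_greatest) auto

lemma norm_div_le_minkowski_gauge: "norm y / R \<le> minkowski_gauge K y"
  unfolding minkowski_gauge_def
proof (rule cInf_greatest)
  show "{t. 0 < t \<and> inverse t *\<^sub>R y \<in> K} \<noteq> {}" using scaled_mem_exists by auto
  fix t assume "t \<in> {t. 0 < t \<and> inverse t *\<^sub>R y \<in> K}"
  then have "0 < t" "norm (inverse t *\<^sub>R y) \<le> R" using outer_ball by auto
  then show "norm y / R \<le> t" using R_pos by (simp add: field_simps)
qed

lemma minkowski_gauge_pos: "y \<noteq> 0 \<Longrightarrow> 0 < minkowski_gauge K y"
  using norm_div_le_minkowski_gauge[of y] R_pos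
  by (smt (verit) divide_pos_pos zero_less_norm_iff)

lemma scaled_mem_if_minkowski_gauge_less:
  assumes "minkowski_gauge K y < s"
  shows "inverse s *\<^sub>R y \<in> K"
proof -
  obtain t where "0 < t" "inverse t *\<^sub>R y \<in> K" "t < s"
    using assms scaled_mem_exists unfolding minkowski_gauge_def
    by (subst (asm) cInf_less_iff) (auto simp: bdd_below_scalings)
  then show ?thesis using scaled_mem_mono[of t y s] by simp
qed

lemma scaled_by_minkowski_gauge_mem:
  assumes "y \<noteq> 0"
  shows "inverse (minkowski_gauge K y) *\<^sub>R y \<in> K"
proof -
  let ?g = "minkowski_gauge K y"
  have "((\<lambda>s. inverse s *\<^sub>R y) \<longlongrightarrow> inverse ?g *\<^sub>R y) (at_right ?g)"
    using minkowski_gauge_pos[OF assms] by (intro tendsto_intros) auto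
  moreover have "eventually (\<lambda>s. inverse s *\<^sub>R y \<in> K) (at_right ?g)"
    using scaled_mem_if_minkowski_gauge_less
    by (auto simp: eventually_at_right_field intro: exI[of _ "?g + 1"])
  ultimately show ?thesis
    by (intro Lim_in_closed_set[OF closed_K]) auto
qed

lemma scaled_by_minkowski_gauge_frontier:
  assumes "y \<noteq> 0"
  shows "inverse (minkowski_gauge K y) *\<^sub>R y \<in> frontier K"
proof -
  let ?g = "minkowski_gauge K y"
  have g: "0 < ?g" using minkowski_gauge_pos assms by auto
  have "inverse ?g *\<^sub>R y \<notin> interior K"
  proof
    assume "inverse ?g *\<^sub>R y \<in> interior K"
    moreover have "((\<lambda>s. inverse s *\<^sub>R y) \<longlongrightarrow> inverse ?g *\<^sub>R y) (at_left ?g)"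
      using g by (intro tendsto_intros) auto
    ultimately have "eventually (\<lambda>s. inverse s *\<^sub>R y \<in> interior K) (at_left ?g)"
      by (metis open_interior topological_tendstoD)
    moreover have "eventually (\<lambda>s. 0 < s \<and> s < ?g) (at_left ?g)"
      using g by (auto simp: eventually_at_left_field intro: exI[of _ 0])
    ultimately have "eventually (\<lambda>s. 0 < s \<and> s < ?g \<and> inverse s *\<^sub>R y \<in> K) (at_left ?g)"
      by eventually_elim (use interior_subset in auto)
    then obtain s where "0 < s" "s < ?g" "inverse s *\<^sub>R y \<in> K"
      using eventually_happens'[of "at_left ?g"] by auto
    then show False using minkowski_gauge_le[of s y] by linarith
  qed
  then show ?thesis
    using scaled_by_minkowski_gauge_mem[OF assms] closure_closed[OF closed_K]
    unfolding frontier_def by blast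
qed

lemma minkowski_gauge_frontier:
  assumes "X \<in> frontier K"
  shows "minkowski_gauge K X = 1"
proof (rule ccontr)
  let ?g = "minkowski_gauge K X"
  assume "?g \<noteq> 1"
  have X0: "X \<noteq> 0" using norm_frontier_ge[OF assms] r_pos by auto
  have "?g \<le> 1" using minkowski_gauge_le[of 1 X] assms frontier_subset_K by auto
  then have "?g < 1" using \<open>?g \<noteq> 1\<close> by simp
  have g: "0 < ?g" using minkowski_gauge_pos X0 by auto
  have "inverse ?g *\<^sub>R X - (1 - ?g) *\<^sub>R (inverse ?g *\<^sub>R X - 0) \<in> interior K"
    using \<open>?g < 1\<close> g ball_subset_interior r_pos
    by (intro mem_interior_convex_shrink[OF convex_K _ scaled_by_minkowski_gauge_mem[OF X0]]) auto
  moreover have "inverse ?g *\<^sub>R X - (1 - ?g) *\<^sub>R (inverse ?g *\<^sub>R X - 0) = X"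
    using g by (simp add: algebra_simps)
  ultimately show False using assms by (simp add: frontier_def)
qed

lemma inner_ge_if_supporting:
  assumes "\<forall>w\<in>K. n \<bullet> (w - Z) \<le> 0"
  shows "r * norm n \<le> n \<bullet> Z"
proof (cases "n = 0")
  case False
  then have "(r / norm n) *\<^sub>R n \<in> K" using inner_ball r_pos by auto
  then have "n \<bullet> ((r / norm n) *\<^sub>R n) \<le> n \<bullet> Z" using assms by (auto simp: inner_diff_right)
  moreover have "n \<bullet> ((r / norm n) *\<^sub>R n) = r * norm n"
    using False by (simp add: dot_square_norm power2_eq_square)
  ultimately show ?thesis by simp
qed simp

lemma minkowski_gauge_ge_if_supporting:
  assumes supp: "\<forall>w\<in>K. n \<bullet> (w - Z) \<le> 0"
  shows "n \<bullet> y \<le> (n \<bullet> Z) * minkowski_gauge K y"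
proof (cases "y = 0")
  case True
  have "0 \<le> n \<bullet> Z" using supp zero_in_K by force
  then show ?thesis using True minkowski_gauge_nonneg by simp
next
  case False
  let ?g = "minkowski_gauge K y"
  have "n \<bullet> (inverse ?g *\<^sub>R y - Z) \<le> 0"
    using supp scaled_by_minkowski_gauge_mem[OF False] by blast
  then have "inverse ?g * (n \<bullet> y) \<le> n \<bullet> Z" by (simp add: inner_diff_right)
  then show ?thesis using minkowski_gauge_pos[OF False] by (simp add: field_simps)
qed

text \<open>Write \<open>y + h = s Z + q\<close> with \<open>s\<close> the claimed bound; \<open>n \<bullet> q\<close> is negative of order \<open>|h|\<close>, so
  \<open>(y + h) / s\<close> lies in the inward cone at \<open>Z\<close>, hence in \<open>K\<close>.\<close>
lemma minkowski_gauge_le_if_inward_cone_step: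
  assumes yZ: "y = g *\<^sub>R Z" "0 < g" and c: "0 < n \<bullet> Z" and "0 \<le> e"
    and A: "A = 1 + norm n * norm Z / (n \<bullet> Z) + e * norm Z"
    and cone: "\<And>w. norm (w - Z) < \<delta> \<Longrightarrow> n \<bullet> (w - Z) \<le> - (e * (n \<bullet> Z) / A) * norm (w - Z) \<Longrightarrow> w \<in> K"
    and small: "2 * norm n * norm h < g * (n \<bullet> Z)" "2 * A * norm h < g * \<delta>"
  shows "minkowski_gauge K (y + h) \<le> g + n \<bullet> h / (n \<bullet> Z) + e * norm h"
proof -
  define s where "s = g + n \<bullet> h / (n \<bullet> Z) + e * norm h"
  define q where "q = h - (n \<bullet> h / (n \<bullet> Z) + e * norm h) *\<^sub>R Z"
  have "1 \<le> A" using A c \<open>0 \<le> e\<close> by simp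
  have "- (n \<bullet> h) \<le> norm n * norm h" using Cauchy_Schwarz_ineq2[of n h] by linarith
  then have "- (n \<bullet> h / (n \<bullet> Z)) \<le> norm n * norm h / (n \<bullet> Z)"
    using divide_right_mono[of "- (n \<bullet> h)" "norm n * norm h" "n \<bullet> Z"] c by simp
  moreover have "norm n * norm h / (n \<bullet> Z) < g / 2" using small(1) c by (simp add: field_simps)
  moreover have "0 \<le> e * norm h" using \<open>0 \<le> e\<close> by simp
  ultimately have s: "g / 2 < s" unfolding s_def by linarith
  have nq: "n \<bullet> q = - (e * norm h * (n \<bullet> Z))" and q: "norm q \<le> A * norm h"
    using normal_correction_bounds[OF c \<open>0 \<le> e\<close>, of h] by (simp_all add: q_def A)
  define w where "w = inverse s *\<^sub>R (y + h)"
  have "y + h = s *\<^sub>R Z + q" by (simp add: q_def s_def yZ algebra_simps)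
  then have wZ: "w - Z = inverse s *\<^sub>R q" using s yZ(2) by (simp add: w_def algebra_simps)
  have "norm (w - Z) \<le> A * norm h / s" using q s yZ(2) by (simp add: wZ divide_right_mono field_simps)
  also have "\<dots> \<le> A * norm h / (g / 2)"
    using s yZ(2) \<open>1 \<le> A\<close> by (intro divide_left_mono) auto
  also have "\<dots> < \<delta>" using small(2) yZ(2) by (simp add: field_simps)
  finally have "norm (w - Z) < \<delta>" .
  moreover have "n \<bullet> (w - Z) \<le> - (e * (n \<bullet> Z) / A) * norm (w - Z)"
  proof -
    have "e * (n \<bullet> Z) * norm q \<le> e * (n \<bullet> Z) * (A * norm h)"
      using q \<open>0 \<le> e\<close> c by (intro mult_left_mono) auto
    then have "(e * (n \<bullet> Z) / A) * norm q \<le> e * (n \<bullet> Z) * norm h"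
      using \<open>1 \<le> A\<close> by (simp add: field_simps)
    then show ?thesis using s yZ(2) by (simp add: wZ nq field_simps)
  qed
  ultimately have "w \<in> K" by (rule cone)
  moreover have "0 < s" using s yZ(2) by linarith
  ultimately show ?thesis using minkowski_gauge_le by (simp add: w_def s_def)
qed

lemma minkowski_gauge_le_if_inward_cone:
  assumes y: "y \<noteq> 0" and Z: "Z = inverse (minkowski_gauge K y) *\<^sub>R y" and c: "0 < n \<bullet> Z"
    and cone: "\<And>e. 0 < e \<Longrightarrow>
      \<exists>d>0. \<forall>w. norm (w - Z) < d \<and> n \<bullet> (w - Z) \<le> - e * norm (w - Z) \<longrightarrow> w \<in> K"
    and e: "0 < e"
  shows "\<exists>d>0. \<forall>y'. norm (y' - y) < d \<longrightarrow>
    minkowski_gauge K y' \<le> minkowski_gauge K y + n \<bullet> (y' - y) / (n \<bullet> Z) + e * norm (y' - y)"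
proof -
  let ?g = "minkowski_gauge K y"
  define A where "A = 1 + norm n * norm Z / (n \<bullet> Z) + e * norm Z"
  have "0 < ?g" "0 < norm n" "1 \<le> A" using minkowski_gauge_pos[OF y] c e by (auto simp: A_def)
  have yZ: "y = ?g *\<^sub>R Z" using Z \<open>0 < ?g\<close> by simp
  obtain \<delta> where "0 < \<delta>"
    and \<delta>: "\<And>w. norm (w - Z) < \<delta> \<Longrightarrow> n \<bullet> (w - Z) \<le> - (e * (n \<bullet> Z) / A) * norm (w - Z) \<Longrightarrow> w \<in> K"
    using cone[of "e * (n \<bullet> Z) / A"] e c \<open>1 \<le> A\<close> by auto
  define d where "d = min (?g * (n \<bullet> Z) / (2 * norm n)) (?g * \<delta> / (2 * A))"
  show ?thesis
  proof (intro exI[of _ d] conjI allI impI)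
    show "0 < d" using \<open>0 < ?g\<close> c \<open>1 \<le> A\<close> \<open>0 < norm n\<close> \<open>0 < \<delta>\<close> by (simp add: d_def)
    fix y' assume "norm (y' - y) < d"
    then have "2 * norm n * norm (y' - y) < ?g * (n \<bullet> Z)" "2 * A * norm (y' - y) < ?g * \<delta>"
      using \<open>0 < norm n\<close> \<open>1 \<le> A\<close> by (simp_all add: d_def pos_less_divide_eq mult_ac)
    from minkowski_gauge_le_if_inward_cone_step[OF yZ \<open>0 < ?g\<close> c _ A_def \<delta> this] e
    show "minkowski_gauge K y' \<le> ?g + n \<bullet> (y' - y) / (n \<bullet> Z) + e * norm (y' - y)" by simp
  qed
qed

lemma minkowski_gauge_has_derivative_if_inward_cone:
  assumes y: "y \<noteq> 0" and Z: "Z = inverse (minkowski_gauge K y) *\<^sub>R y"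
    and supp: "\<forall>w\<in>K. n \<bullet> (w - Z) \<le> 0" and nZ: "0 < n \<bullet> Z"
    and cone: "\<And>e. 0 < e \<Longrightarrow>
      \<exists>d>0. \<forall>w. norm (w - Z) < d \<and> n \<bullet> (w - Z) \<le> - e * norm (w - Z) \<longrightarrow> w \<in> K"
  shows "(minkowski_gauge K has_derivative (\<lambda>h. (inverse (n \<bullet> Z) *\<^sub>R n) \<bullet> h)) (at y)"
  unfolding has_derivative_at_alt
proof (intro conjI allI impI)
  show "bounded_linear (\<lambda>h. (inverse (n \<bullet> Z) *\<^sub>R n) \<bullet> h)" by (rule bounded_linear_inner_right)
  fix e :: real assume "0 < e"
  then obtain d where "0 < d" and upper: "\<And>y'. norm (y' - y) < d \<Longrightarrow>
      minkowski_gauge K y' \<le> minkowski_gauge K y + n \<bullet> (y' - y) / (n \<bullet> Z) + e * norm (y' - y)"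
    using minkowski_gauge_le_if_inward_cone[OF y Z nZ cone] by blast
  have gy: "minkowski_gauge K y = n \<bullet> y / (n \<bullet> Z)"
    using Z minkowski_gauge_pos[OF y] nZ by (simp add: field_simps)
  have lower: "n \<bullet> y' / (n \<bullet> Z) \<le> minkowski_gauge K y'" for y'
    using minkowski_gauge_ge_if_supporting[OF supp, of y'] nZ by (simp add: field_simps)
  show "\<exists>d>0. \<forall>y'. norm (y' - y) < d \<longrightarrow> norm (minkowski_gauge K y' - minkowski_gauge K y
      - (inverse (n \<bullet> Z) *\<^sub>R n) \<bullet> (y' - y)) \<le> e * norm (y' - y)"
  proof (intro exI[of _ d] conjI allI impI \<open>0 < d\<close>)
    fix y' assume "norm (y' - y) < d"
    moreover have "(inverse (n \<bullet> Z) *\<^sub>R n) \<bullet> (y' - y) = n \<bullet> y' / (n \<bullet> Z) - n \<bullet> y / (n \<bullet> Z)"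
      by (simp add: inner_diff_right diff_divide_distrib divide_inverse_commute)
    ultimately show "norm (minkowski_gauge K y' - minkowski_gauge K y
        - (inverse (n \<bullet> Z) *\<^sub>R n) \<bullet> (y' - y)) \<le> e * norm (y' - y)"
      using upper[of y'] lower[of y'] gy by (simp add: inner_diff_right diff_divide_distrib abs_le_iff)
  qed
qed

lemma minkowski_gauge_has_derivative_chart:
  assumes y: "y \<noteq> 0" and Z: "Z = inverse (minkowski_gauge K y) *\<^sub>R y"
    and U: "open U" "Z \<in> U" and der: "(\<rho> has_derivative (\<lambda>h. n \<bullet> h)) (at Z)" and "n \<noteq> 0"
    and KU: "K \<inter> U = {w\<in>U. \<rho> w \<le> 0}"
  shows "(minkowski_gauge K has_derivative (\<lambda>h. (inverse (n \<bullet> Z) *\<^sub>R n) \<bullet> h)) (at y)"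
    and "r * norm n \<le> n \<bullet> Z"
proof -
  have Zf: "Z \<in> frontier K" using scaled_by_minkowski_gauge_frontier[OF y] Z by simp
  have "\<rho> Z = 0"
    using chart_vanishes_at_frontier[OF Zf U(2) closed_K U(1) has_derivative_continuous[OF der] KU] .
  then have supp: "\<forall>w\<in>K. n \<bullet> (w - Z) \<le> 0"
    using chart_gradient_supports[OF convex_K _ _ U _ der KU] Zf frontier_subset_K by blast
  show "r * norm n \<le> n \<bullet> Z" by (rule inner_ge_if_supporting[OF supp])
  then have "0 < n \<bullet> Z" using r_pos \<open>n \<noteq> 0\<close> by (smt (verit) mult_pos_pos zero_less_norm_iff)
  then show "(minkowski_gauge K has_derivative (\<lambda>h. (inverse (n \<bullet> Z) *\<^sub>R n) \<bullet> h)) (at y)"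
    using chart_inward_cone_subset[OF U \<open>\<rho> Z = 0\<close> der KU]
    by (intro minkowski_gauge_has_derivative_if_inward_cone[OF y Z supp]) auto
qed

lemma minkowski_gauge_grad_chart:
  assumes y: "y \<noteq> 0" and U: "open U" "inverse (minkowski_gauge K y) *\<^sub>R y \<in> U"
    and chart: "\<forall>w\<in>U. (\<rho> has_derivative (\<lambda>h. g w \<bullet> h)) (at w) \<and> g w \<noteq> 0"
    and KU: "K \<inter> U = {w\<in>U. \<rho> w \<le> 0}"
  defines "Z \<equiv> inverse (minkowski_gauge K y) *\<^sub>R y"
  shows "(minkowski_gauge K has_derivative (\<lambda>h. minkowski_gauge_grad K y \<bullet> h)) (at y)"
    and "minkowski_gauge_grad K y = inverse (g Z \<bullet> Z) *\<^sub>R g Z"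
    and "r * norm (g Z) \<le> g Z \<bullet> Z"
proof -
  note chart_Z = minkowski_gauge_has_derivative_chart[OF y meta_eq_to_obj_eq[OF Z_def] U(1)
      U(2)[folded Z_def] _ _ KU]
  have der: "(minkowski_gauge K has_derivative (\<lambda>h. (inverse (g Z \<bullet> Z) *\<^sub>R g Z) \<bullet> h)) (at y)"
    using chart_Z(1) chart U(2) by (simp add: Z_def)
  then show "(minkowski_gauge K has_derivative (\<lambda>h. minkowski_gauge_grad K y \<bullet> h)) (at y)"
    unfolding minkowski_gauge_grad_def by (rule someI)
  then show "minkowski_gauge_grad K y = inverse (g Z \<bullet> Z) *\<^sub>R g Z"
    using der by (rule has_derivative_inner_unique)
  show "r * norm (g Z) \<le> g Z \<bullet> Z"
    using chart_Z(2) chart U(2) by (simp add: Z_def)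
qed

end

locale C1_convex_body_between_balls = convex_body_between_balls +
  assumes C1_boundary: "C1_boundary K"
begin

lemma radial_chart:
  assumes "y \<noteq> 0"
  obtains U \<rho> g where "open U" "inverse (minkowski_gauge K y) *\<^sub>R y \<in> U"
    "\<forall>w\<in>U. (\<rho> has_derivative (\<lambda>h. g w \<bullet> h)) (at w) \<and> g w \<noteq> 0"
    "continuous_on U g" "K \<inter> U = {w\<in>U. \<rho> w \<le> 0}"
  using bspec[OF C1_boundary[unfolded C1_boundary_def] scaled_by_minkowski_gauge_frontier[OF assms]]
  by blast

lemma minkowski_gauge_has_derivative:
  assumes "y \<noteq> 0"
  shows "(minkowski_gauge K has_derivative (\<lambda>h. minkowski_gauge_grad K y \<bullet> h)) (at y)"
proof -
  obtain U \<rho> g where "open U" "inverse (minkowski_gauge K y) *\<^sub>R y \<in> U"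
    "\<forall>w\<in>U. (\<rho> has_derivative (\<lambda>h. g w \<bullet> h)) (at w) \<and> g w \<noteq> 0"
    "continuous_on U g" "K \<inter> U = {w\<in>U. \<rho> w \<le> 0}"
    by (rule radial_chart[OF assms])
  then show ?thesis using minkowski_gauge_grad_chart(1)[OF assms] by blast
qed

lemma continuous_on_minkowski_gauge: "continuous_on (- {0}) (minkowski_gauge K)"
  using minkowski_gauge_has_derivative has_derivative_continuous
  by (intro continuous_at_imp_continuous_on) blast

lemma norm_minkowski_gauge_grad_le:
  assumes "y \<noteq> 0"
  shows "norm (minkowski_gauge_grad K y) \<le> 1 / r"
proof -
  define Z where "Z = inverse (minkowski_gauge K y) *\<^sub>R y"
  obtain U \<rho> g where chart: "open U" "Z \<in> U"
    "\<forall>w\<in>U. (\<rho> has_derivative (\<lambda>h. g w \<bullet> h)) (at w) \<and> g w \<noteq> 0"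
    "continuous_on U g" "K \<inter> U = {w\<in>U. \<rho> w \<le> 0}"
    unfolding Z_def by (rule radial_chart[OF assms])
  note grad = minkowski_gauge_grad_chart[OF assms chart(1) chart(2)[unfolded Z_def] chart(3,5), folded Z_def]
  have "0 < norm (g Z)" using chart(2,3) by simp
  then have "0 < g Z \<bullet> Z" using grad(3) r_pos by (smt (verit) mult_pos_pos)
  then show ?thesis using grad(2,3) r_pos by (simp add: field_simps)
qed

lemma continuous_on_minkowski_gauge_grad: "continuous_on (- {0}) (minkowski_gauge_grad K)"
proof (intro continuous_at_imp_continuous_on ballI)
  fix y :: 'a assume "y \<in> - {0}"
  then have y: "y \<noteq> 0" by simp
  define p where "p y' = inverse (minkowski_gauge K y') *\<^sub>R y'" for y'
  obtain U \<rho> g where chart: "open U" "p y \<in> U"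
    "\<forall>w\<in>U. (\<rho> has_derivative (\<lambda>h. g w \<bullet> h)) (at w) \<and> g w \<noteq> 0"
    "continuous_on U g" "K \<inter> U = {w\<in>U. \<rho> w \<le> 0}"
    unfolding p_def by (rule radial_chart[OF y])
  define F where "F y' = inverse (g (p y') \<bullet> p y') *\<^sub>R g (p y')" for y'
  have "isCont (minkowski_gauge K) y"
    using minkowski_gauge_has_derivative[OF y] has_derivative_continuous by blast
  then have "isCont p y"
    unfolding p_def using minkowski_gauge_pos[OF y] by (intro continuous_intros) auto
  moreover have "isCont g (p y)"
    using chart(1,2,4) continuous_on_eq_continuous_at by blast
  ultimately have "isCont (\<lambda>y'. g (p y')) y" by (rule isCont_o2)
  moreover have "0 < g (p y) \<bullet> p y"
    using minkowski_gauge_grad_chart(3)[OF y chart(1) chart(2)[unfolded p_def] chart(3,5)]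
      chart(2,3) r_pos unfolding p_def by (smt (verit) mult_pos_pos zero_less_norm_iff)
  ultimately have "isCont F y"
    unfolding F_def using \<open>isCont p y\<close> by (intro continuous_intros) auto
  have "eventually (\<lambda>y'. p y' \<in> U) (nhds y)"
    using \<open>isCont p y\<close> chart(1,2) by (simp add: isCont_def tendsto_at_iff_tendsto_nhds topological_tendstoD)
  moreover have "eventually (\<lambda>y'. y' \<noteq> 0) (nhds y)" using y by (rule t1_space_nhds)
  ultimately have "eventually (\<lambda>y'. minkowski_gauge_grad K y' = F y') (nhds y)"
    by eventually_elim
      (use minkowski_gauge_grad_chart(2)[OF _ chart(1) _ chart(3,5)] in \<open>simp add: F_def p_def\<close>)
  then show "isCont (minkowski_gauge_grad K) y" using \<open>isCont F y\<close> isCont_cong by blast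
qed

lemma radial_projection_has_vector_derivative:
  assumes c: "(c has_vector_derivative c') (at t within S)" and "c t \<noteq> 0"
  shows "((\<lambda>t. inverse (minkowski_gauge K (c t)) *\<^sub>R c t) has_vector_derivative
    inverse (minkowski_gauge K (c t)) *\<^sub>R c'
      - (minkowski_gauge_grad K (c t) \<bullet> c' / minkowski_gauge K (c t) ^ 2) *\<^sub>R c t) (at t within S)"
proof -
  let ?\<gamma> = "\<lambda>t. minkowski_gauge K (c t)" and ?G = "minkowski_gauge_grad K (c t) \<bullet> c'"
  have "(?\<gamma> has_derivative (\<lambda>s. minkowski_gauge_grad K (c t) \<bullet> (s *\<^sub>R c'))) (at t within S)"
    using c minkowski_gauge_has_derivative[OF \<open>c t \<noteq> 0\<close>] unfolding has_vector_derivative_def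
    by (rule has_derivative_compose)
  then have "(?\<gamma> has_real_derivative ?G) (at t within S)"
    by (simp add: has_field_derivative_def mult.commute[of _ ?G])
  then have "((\<lambda>t. inverse (?\<gamma> t)) has_real_derivative - (?G * inverse (?\<gamma> t ^ Suc (Suc 0))))
      (at t within S)"
    using minkowski_gauge_pos[OF \<open>c t \<noteq> 0\<close>] by (intro DERIV_inverse_fun) auto
  from has_vector_derivative_scaleR[OF this c] show ?thesis
    by (simp add: divide_inverse numeral_2_eq_2)
qed

lemma continuous_on_radial_projection_derivative:
  assumes "continuous_on S c" "continuous_on S c'" "\<And>t. t \<in> S \<Longrightarrow> c t \<noteq> 0"
  shows "continuous_on S (\<lambda>t. inverse (minkowski_gauge K (c t)) *\<^sub>R c' t
    - (minkowski_gauge_grad K (c t) \<bullet> c' t / minkowski_gauge K (c t) ^ 2) *\<^sub>R c t)"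
proof -
  have "c ` S \<subseteq> - {0}" using assms(3) by auto
  then have "continuous_on S (\<lambda>t. minkowski_gauge K (c t))"
    and "continuous_on S (\<lambda>t. minkowski_gauge_grad K (c t))"
    using continuous_on_compose2[OF continuous_on_minkowski_gauge assms(1)]
      continuous_on_compose2[OF continuous_on_minkowski_gauge_grad assms(1)] by auto
  moreover have "minkowski_gauge K (c t) \<noteq> 0" if "t \<in> S" for t
    using minkowski_gauge_pos[OF assms(3)[OF that]] by simp
  ultimately show ?thesis
    using assms(1,2) by (intro continuous_intros) auto
qed

lemma norm_radial_projection_derivative_le:
  assumes "0 < a" "a \<le> norm x" "norm x \<le> b" "norm v \<le> L"
  shows "norm (inverse (minkowski_gauge K x) *\<^sub>R v
      - (minkowski_gauge_grad K x \<bullet> v / minkowski_gauge K x ^ 2) *\<^sub>R x)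
    \<le> R / a * L + (R / a)\<^sup>2 * (L / r) * b"
proof -
  have x: "x \<noteq> 0" using assms by auto
  define ig where "ig = inverse (minkowski_gauge K x)"
  have "0 < ig" using minkowski_gauge_pos[OF x] by (simp add: ig_def)
  have "a / R \<le> minkowski_gauge K x"
    using norm_div_le_minkowski_gauge[of x] assms(2) R_pos divide_right_mono[of a "norm x" R] by linarith
  then have ig_le: "ig \<le> R / a"
    using assms(1) R_pos unfolding ig_def by (metis divide_pos_pos inverse_eq_divide le_imp_inverse_le inverse_divide)
  have G: "\<bar>minkowski_gauge_grad K x \<bullet> v\<bar> \<le> L / r"
  proof -
    have "\<bar>minkowski_gauge_grad K x \<bullet> v\<bar> \<le> norm (minkowski_gauge_grad K x) * norm v"
      by (rule Cauchy_Schwarz_ineq2)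
    also have "\<dots> \<le> 1 / r * L"
      using norm_minkowski_gauge_grad_le[OF x] assms(4) r_pos by (intro mult_mono) auto
    finally show ?thesis by simp
  qed
  have "norm ((minkowski_gauge_grad K x \<bullet> v * ig\<^sup>2) *\<^sub>R x)
      = ig\<^sup>2 * \<bar>minkowski_gauge_grad K x \<bullet> v\<bar> * norm x"
    by (simp add: abs_mult)
  then have "norm (ig *\<^sub>R v - (minkowski_gauge_grad K x \<bullet> v * ig\<^sup>2) *\<^sub>R x)
      \<le> ig * norm v + ig\<^sup>2 * \<bar>minkowski_gauge_grad K x \<bullet> v\<bar> * norm x"
    using norm_triangle_ineq4[of "ig *\<^sub>R v" "(minkowski_gauge_grad K x \<bullet> v * ig\<^sup>2) *\<^sub>R x"]
      norm_scaleR[of ig v] abs_of_pos[OF \<open>0 < ig\<close>] by linarith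
  also have "\<dots> \<le> R / a * L + (R / a)\<^sup>2 * (L / r) * b"
    using ig_le \<open>0 < ig\<close> G assms r_pos norm_ge_zero[of v] order.trans[of 0 "norm v" L]
    by (intro add_mono mult_mono power_mono) auto
  finally show ?thesis by (simp add: ig_def power_inverse divide_inverse)
qed

lemma boundary_dist_le_radial_projection:
  fixes c c' :: "real \<Rightarrow> 'a"
  assumes der: "\<And>t. t \<in> {0..1} \<Longrightarrow> (c has_vector_derivative c' t) (at t within {0..1})"
    and "continuous_on {0..1} c'" and ends: "c 0 \<in> frontier K" "c 1 \<in> frontier K"
    and "0 < a" and bounds: "\<And>t. t \<in> {0..1} \<Longrightarrow> a \<le> norm (c t) \<and> norm (c t) \<le> b \<and> norm (c' t) \<le> L"
  shows "boundary_dist K (c 0) (c 1) \<le> ereal (R / a * L + (R / a)\<^sup>2 * (L / r) * b)"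
proof -
  define \<sigma> where "\<sigma> t = inverse (minkowski_gauge K (c t)) *\<^sub>R c t" for t
  define \<sigma>' where "\<sigma>' t = inverse (minkowski_gauge K (c t)) *\<^sub>R c' t
    - (minkowski_gauge_grad K (c t) \<bullet> c' t / minkowski_gauge K (c t) ^ 2) *\<^sub>R c t" for t
  have c0: "c t \<noteq> 0" if "t \<in> {0..1}" for t using bounds[OF that] \<open>0 < a\<close> by auto
  have "continuous_on {0..1} c"
    using der has_vector_derivative_continuous continuous_on_eq_continuous_within by blast
  have "boundary_dist K (\<sigma> 0) (\<sigma> 1) \<le> ereal (R / a * L + (R / a)\<^sup>2 * (L / r) * b)"
  proof (rule boundary_dist_le_if_path)
    show "(\<sigma> has_vector_derivative \<sigma>' t) (at t within {0..1})" if "t \<in> {0..1}" for t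
      unfolding \<sigma>_def \<sigma>'_def using der[OF that] c0[OF that]
      by (rule radial_projection_has_vector_derivative)
    show "continuous_on {0..1} \<sigma>'"
      unfolding \<sigma>'_def using \<open>continuous_on {0..1} c\<close> \<open>continuous_on {0..1} c'\<close> c0
      by (rule continuous_on_radial_projection_derivative)
    show "\<sigma> ` {0..1} \<subseteq> frontier K"
      using scaled_by_minkowski_gauge_frontier c0 by (auto simp: \<sigma>_def)
    show "norm (\<sigma>' t) \<le> R / a * L + (R / a)\<^sup>2 * (L / r) * b" if "t \<in> {0..1}" for t
      unfolding \<sigma>'_def using \<open>0 < a\<close> bounds[OF that] by (intro norm_radial_projection_derivative_le) auto
  qed
  moreover have "\<sigma> 0 = c 0" "\<sigma> 1 = c 1"
    using minkowski_gauge_frontier[OF ends(1)] minkowski_gauge_frontier[OF ends(2)] by (simp_all add: \<sigma>_def)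
  ultimately show ?thesis by simp
qed

lemma boundary_dist_le_dist:
  assumes "DIM('a) \<ge> 2" and X: "X \<in> frontier K" and Y: "Y \<in> frontier K"
  shows "boundary_dist K X Y \<le> ereal ((25 * R / r + 1375 * R ^ 3 / r ^ 3) * dist X Y)"
proof -
  obtain W where W: "norm W = 1" "W \<bullet> (X - Y) = 0" "0 \<le> W \<bullet> X"
    using unit_orthogonal_vector_exists[OF assms(1)] by blast
  define c' where "c' t = (Y - X) + (4 * dist X Y * (1 - 2 * t)) *\<^sub>R W" for t
  have "dist X Y \<le> 2 * R"
    using dist_triangle[of X Y 0] norm_frontier_le[OF X] norm_frontier_le[OF Y] by (simp add: dist_norm)
  have bounds: "r / 5 \<le> norm (detour X Y W t) \<and> norm (detour X Y W t) \<le> 11 * R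
      \<and> norm (c' t) \<le> 5 * dist X Y" if t: "t \<in> {0..1}" for t
  proof (intro conjI)
    show "r / 5 \<le> norm (detour X Y W t)"
      using norm_detour_ge[OF W t norm_frontier_ge[OF X] norm_frontier_ge[OF Y] r_pos] .
    have "norm (detour X Y W t) \<le> norm X + norm (detour X Y W t - X)"
      using norm_triangle_ineq[of X "detour X Y W t - X"] by simp
    moreover have "5 * t * dist X Y \<le> 5 * 1 * (2 * R)"
      using t \<open>dist X Y \<le> 2 * R\<close> by (intro mult_mono) auto
    ultimately show "norm (detour X Y W t) \<le> 11 * R"
      using norm_detour_diff_le(1)[where X = X and Y = Y, OF W(1) t] norm_frontier_le[OF X] by linarith
    show "norm (c' t) \<le> 5 * dist X Y"
      unfolding c'_def by (rule norm_detour_derivative_le[OF W(1) t])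
  qed
  have "boundary_dist K (detour X Y W 0) (detour X Y W 1)
      \<le> ereal (R / (r / 5) * (5 * dist X Y) + (R / (r / 5))\<^sup>2 * (5 * dist X Y / r) * (11 * R))"
  proof (rule boundary_dist_le_radial_projection)
    show "(detour X Y W has_vector_derivative c' t) (at t within {0..1})" for t
      unfolding c'_def by (rule has_vector_derivative_at_within[OF detour_has_vector_derivative])
    show "continuous_on {0..1} c'" unfolding c'_def by (intro continuous_intros)
  qed (use X Y r_pos bounds in \<open>simp_all add: detour_endpoints\<close>)
  also have "R / (r / 5) * (5 * dist X Y) + (R / (r / 5))\<^sup>2 * (5 * dist X Y / r) * (11 * R)
      = (25 * R / r + 1375 * R ^ 3 / r ^ 3) * dist X Y"
    using r_pos by (simp add: field_simps power2_eq_square power3_eq_cube)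
  finally show ?thesis by (simp add: detour_endpoints)
qed

end

lemma between_balls_if_hausdorff_dist_less:
  fixes A B :: "'a::euclidean_space set"
  assumes A: "convex_body A" and B: "compact B" "cball 0 (2 * e) \<subseteq> B" "B \<subseteq> cball 0 R"
    and h: "hausdorff_dist A B < e" and "0 < e"
  shows "convex_body_between_balls A e (R + e)"
proof (rule convex_body_between_balls.intro)
  show "compact A" "convex A" using A by (simp_all add: convex_body_def)
  show "0 < e" by fact
  have "interior A \<noteq> {}" using A by (simp add: convex_body_def)
  then have "A \<noteq> {}" using interior_subset by blast
  have "cball 0 (e + e) \<subseteq> B" using B(2) by (simp only: mult_2)
  then show "cball 0 e \<subseteq> A"
    by (rule cball_subset_if_hausdorff_dist_less[OF \<open>convex A\<close> compact_imp_closed[OF \<open>compact A\<close>]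
        \<open>A \<noteq> {}\<close> B(1) _ h \<open>0 < e\<close>])
  have "0 \<in> B" using B(2) \<open>0 < e\<close> by (simp add: subset_iff)
  then have "B \<noteq> {}" by blast
  then show "A \<subseteq> cball 0 (R + e)"
    by (rule subset_cball_if_hausdorff_dist_less[OF \<open>compact A\<close> compact_imp_closed[OF B(1)] _ B(3) h])
qed

lemma eventually_between_balls_if_hausdorff_tendsto:
  fixes \<Omega> :: "'a::euclidean_space set"
  assumes body: "convex_body \<Omega>" and zero: "0 \<in> interior \<Omega>"
  obtains r R where "0 < r" "0 < R"
    "\<And>A. (\<forall>k. convex_body (A k)) \<Longrightarrow> (\<lambda>k. hausdorff_dist (A k) \<Omega>) \<longlonglongrightarrow> 0 \<Longrightarrow>
      eventually (\<lambda>k. convex_body_between_balls (A k) r R) sequentially"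
proof -
  obtain r0 where "0 < r0" "cball 0 r0 \<subseteq> \<Omega>" using zero mem_interior_cball by blast
  define r where "r = r0 / 2"
  have "0 < r" and inner: "cball 0 (2 * r) \<subseteq> \<Omega>"
    using \<open>0 < r0\<close> \<open>cball 0 r0 \<subseteq> \<Omega>\<close> by (simp_all add: r_def)
  have "compact \<Omega>" using body by (simp add: convex_body_def)
  then have "bounded \<Omega>" by (rule compact_imp_bounded)
  then obtain R0 where "\<forall>y\<in>\<Omega>. dist 0 y \<le> R0" using bounded_any_center[of \<Omega> 0] by blast
  then have outer: "\<Omega> \<subseteq> cball 0 R0" by (simp add: subset_iff)
  have "0 \<in> \<Omega>" using inner \<open>0 < r\<close> by (simp add: subset_iff)
  then have "0 < R0 + r" using outer \<open>0 < r\<close> by (auto simp: subset_iff)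
  show ?thesis
  proof (rule that[OF \<open>0 < r\<close> \<open>0 < R0 + r\<close>])
    fix A :: "nat \<Rightarrow> 'a set"
    assume "\<forall>k. convex_body (A k)" and "(\<lambda>k. hausdorff_dist (A k) \<Omega>) \<longlonglongrightarrow> 0"
    then have "eventually (\<lambda>k. convex_body (A k) \<and> hausdorff_dist (A k) \<Omega> < r) sequentially"
      using \<open>0 < r\<close> order_tendstoD(2) by force
    then show "eventually (\<lambda>k. convex_body_between_balls (A k) r (R0 + r)) sequentially"
      by eventually_elim
        (use between_balls_if_hausdorff_dist_less[OF _ \<open>compact \<Omega>\<close> inner outer _ \<open>0 < r\<close>] in blast)
  qed
qed

theorem lemma5p6:
  fixes \<Omega> :: "'a::euclidean_space set"
  assumes dim: "DIM('a) \<ge> 2"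
    and body: "convex_body \<Omega>"
    and C1: "C1_boundary \<Omega>"
    and zero: "0 \<in> interior \<Omega>"
  shows "\<exists>C>0. \<forall>\<Omega>k :: nat \<Rightarrow> 'a set.
           (\<forall>k. convex_body (\<Omega>k k) \<and> smooth_boundary (\<Omega>k k) \<and> uniformly_convex (\<Omega>k k))
           \<and> (\<lambda>k. hausdorff_dist (\<Omega>k k) \<Omega>) \<longlonglongrightarrow> 0
           \<longrightarrow> (\<exists>K. \<forall>k\<ge>K. \<forall>X\<in>frontier (\<Omega>k k). \<forall>Y\<in>frontier (\<Omega>k k).
                 boundary_dist (\<Omega>k k) X Y \<le> ereal (C * dist X Y))"
proof -
  obtain r R where "0 < r" "0 < R" and between:
    "\<And>A. (\<forall>k. convex_body (A k)) \<Longrightarrow> (\<lambda>k. hausdorff_dist (A k) \<Omega>) \<longlonglongrightarrow> 0 \<Longrightarrow>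
      eventually (\<lambda>k. convex_body_between_balls (A k) r R) sequentially"
    using eventually_between_balls_if_hausdorff_tendsto[OF body zero] by blast
  show ?thesis
  proof (intro exI[of _ "25 * R / r + 1375 * R ^ 3 / r ^ 3"] conjI allI impI)
    show "0 < 25 * R / r + 1375 * R ^ 3 / r ^ 3"
      using \<open>0 < r\<close> \<open>0 < R\<close> by (intro add_pos_pos divide_pos_pos) auto
    fix \<Omega>k :: "nat \<Rightarrow> 'a set"
    assume approx: "(\<forall>k. convex_body (\<Omega>k k) \<and> smooth_boundary (\<Omega>k k) \<and> uniformly_convex (\<Omega>k k))
      \<and> (\<lambda>k. hausdorff_dist (\<Omega>k k) \<Omega>) \<longlonglongrightarrow> 0"
    then obtain N where "\<And>k. k \<ge> N \<Longrightarrow> convex_body_between_balls (\<Omega>k k) r R"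
      using between[of \<Omega>k] by (auto simp: eventually_sequentially)
    moreover have "C1_boundary (\<Omega>k k)" for k using approx smooth_boundary_imp_C1_boundary by blast
    ultimately have "C1_convex_body_between_balls (\<Omega>k k) r R" if "k \<ge> N" for k
      using that by (simp add: C1_convex_body_between_balls_def C1_convex_body_between_balls_axioms_def)
    then show "\<exists>K. \<forall>k\<ge>K. \<forall>X\<in>frontier (\<Omega>k k). \<forall>Y\<in>frontier (\<Omega>k k).
        boundary_dist (\<Omega>k k) X Y \<le> ereal ((25 * R / r + 1375 * R ^ 3 / r ^ 3) * dist X Y)"
      using C1_convex_body_between_balls.boundary_dist_le_dist[OF _ dim] by blast
  qed
qed

end
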